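(* In the setting of the simple-region decomposition (split $\Gamma$ at the $y$-portals $\operatorname{portal}_y(v_{WNW}(H))$, $\operatorname{portal}_y(v_{ESE}(H))$ and at the nodes $v_{WNW}(H)$, $v_{ESE}(H)$ for every inner hole $H\in\mathcal H$), the number of gates, i.e. of nonempty sets of the form $R\cap P$ where $R$ is (the node set of) a resulting region and $P$ is one of the splitting portals, is at most $6|\mathcal H|$.
   Context: $G_\Delta$ is the infinite regular triangular grid graph (neighbour directions E, W, NNE, SSW, NNW, SSE; $y$-axis = NNE–SSW; WNW/ESE perpendicular to it). $\Gamma=(V,E)$ is a triangular grid graph (connected subgraph of $G_\Delta$ induced by a finite $V$) and $\mathcal H$ its set of inner holes (bounded connected components of the subgraph of $G_\Delta$ induced by $V_\Delta\setminus V$). The boundary of a hole $H$ is the set of nodes of $V$ adjacent to a node of $H$; $v_{WNW}(H)$ ($v_{ESE}(H)$) is the boundary node of $H$ extremal in direction WNW (ESE), ties broken NNE-most. A $y$-portal is a connected component of $(V,E_y)$ with $E_y$ the edges parallel to the $y$-axis. Splitting at a $y$-portal $P$ replaces each $p\in P$ by copies $p_W$ (adjacent to the $W$-copies of its neighbours on $P$ and to $p$'s neighbours in directions NNW, W) and $p_E$ (adjacent to the $E$-copies of its neighbours on $P$ and to $p$'s neighbours in directions SSE, E). Splitting at $v_{WNW}(H)$ (whose adjacent hole point lies in direction E or SSE) replaces $v_E$ by $v_E^N$ (neighbours of $v_E$ in directions NNE, E) and $v_E^S$ (neighbours of $v_E$ in directions SSW, SSE); splitting at $v_{ESE}(H)$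 (adjacent hole point in direction W or NNW) replaces $v_W$ by $v_W^S$ (neighbours in directions SSW, W) and $v_W^N$ (neighbours in directions NNE, NNW). The resulting regions are the grid-point sets underlying the connected components of the split graph. *)

theory Defs
  imports Main
begin

text \<open>Triangular grid in axial coordinates (a,b) :: int \<times> int.
  The y-axis is the NNE--SSW direction (first coordinate constant).
  The extent in direction ESE is measured by the first coordinate, the
  extent in direction NNE (for fixed first coordinate) by the second one.\<close>

definition dE :: "int \<times> int" where "dE = (1,0)"
definition dW :: "int \<times> int" where "dW = (-1,0)"
definition dNNE :: "int \<times> int" where "dNNE = (0,1)"
definition dSSW :: "int \<times> int" where "dSSW = (0,-1)"
definition dNNW :: "int \<times> int" where "dNNW = (-1,1)"
definition dSSE :: "int \<times> int" where "dSSE = (1,-1)"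

definition dirs6 :: "(int \<times> int) set" where
  "dirs6 = {dE, dW, dNNE, dSSW, dNNW, dSSE}"

definition diff :: "int \<times> int \<Rightarrow> int \<times> int \<Rightarrow> int \<times> int" where
  "diff p q = (fst q - fst p, snd q - snd p)"

definition grid_adj :: "int \<times> int \<Rightarrow> int \<times> int \<Rightarrow> bool" where
  "grid_adj p q \<longleftrightarrow> diff p q \<in> dirs6"

definition comp :: "('a \<Rightarrow> 'a \<Rightarrow> bool) \<Rightarrow> 'a set \<Rightarrow> 'a \<Rightarrow> 'a set" where
  "comp r S x = {y. x \<in> S \<and> y \<in> S \<and> (\<lambda>a b. a \<in> S \<and> b \<in> S \<and> r a b)\<^sup>*\<^sup>* x y}"

definition grid_connected :: "(int \<times> int) set \<Rightarrow> bool" where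
  "grid_connected V \<longleftrightarrow> (\<forall>x\<in>V. \<forall>y\<in>V. y \<in> comp grid_adj V x)"

text \<open>Inner holes: bounded (= finite) components of the complement.\<close>
definition holes :: "(int \<times> int) set \<Rightarrow> (int \<times> int) set set" where
  "holes V = {comp grid_adj (- V) x | x. x \<notin> V \<and> finite (comp grid_adj (- V) x)}"

definition hole_boundary :: "(int \<times> int) set \<Rightarrow> (int \<times> int) set \<Rightarrow> (int \<times> int) set" where
  "hole_boundary V H = {v \<in> V. \<exists>h\<in>H. grid_adj v h}"

definition v_WNW :: "(int \<times> int) set \<Rightarrow> (int \<times> int) set \<Rightarrow> int \<times> int" where
  "v_WNW V H = (THE v. v \<in> hole_boundary V H \<and>
     (\<forall>u\<in>hole_boundary V H. fst v < fst u \<or> (fst v = fst u \<and> snd u \<le> snd v)))"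

definition v_ESE :: "(int \<times> int) set \<Rightarrow> (int \<times> int) set \<Rightarrow> int \<times> int" where
  "v_ESE V H = (THE v. v \<in> hole_boundary V H \<and>
     (\<forall>u\<in>hole_boundary V H. fst u < fst v \<or> (fst v = fst u \<and> snd u \<le> snd v)))"

definition y_adj :: "int \<times> int \<Rightarrow> int \<times> int \<Rightarrow> bool" where
  "y_adj p q \<longleftrightarrow> diff p q \<in> {dNNE, dSSW}"

definition portal_y :: "(int \<times> int) set \<Rightarrow> int \<times> int \<Rightarrow> (int \<times> int) set" where
  "portal_y V v = comp y_adj V v"

definition split_portals :: "(int \<times> int) set \<Rightarrow> (int \<times> int) set set" where
  "split_portals V = (\<Union>H\<in>holes V. {portal_y V (v_WNW V H), portal_y V (v_ESE V H)})"

text \<open>A copy carries the set of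
  directions of the original node's neighbours it inherits, and a side
  (0 = unsplit, 1 = West copy, 2 = East copy); edges along a portal
  connect only copies on the same side.\<close>
datatype copy = Orig | CW | CE | CWS | CWN | CEN | CES

fun copy_dirs :: "copy \<Rightarrow> (int \<times> int) set" where
  "copy_dirs Orig = dirs6"
| "copy_dirs CW = {dNNE, dSSW, dNNW, dW}"
| "copy_dirs CE = {dNNE, dSSW, dSSE, dE}"
| "copy_dirs CWS = {dSSW, dW}"
| "copy_dirs CWN = {dNNE, dNNW}"
| "copy_dirs CEN = {dNNE, dE}"
| "copy_dirs CES = {dSSW, dSSE}"

fun copy_side :: "copy \<Rightarrow> nat" where
  "copy_side Orig = 0"
| "copy_side CW = 1" | "copy_side CWS = 1" | "copy_side CWN = 1"
| "copy_side CE = 2" | "copy_side CEN = 2" | "copy_side CES = 2"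

definition split_nodes :: "(int \<times> int) set \<Rightarrow> ((int \<times> int) \<times> copy) set" where
  "split_nodes V = {(p, c). p \<in> V \<and>
     (if p \<in> \<Union>(split_portals V)
      then c \<in> (if p \<in> v_ESE V ` holes V then {CWS, CWN} else {CW})
              \<union> (if p \<in> v_WNW V ` holes V then {CEN, CES} else {CE})
      else c = Orig)}"

definition split_adj :: "(int \<times> int) \<times> copy \<Rightarrow> (int \<times> int) \<times> copy \<Rightarrow> bool" where
  "split_adj x y \<longleftrightarrow>
     (let d = diff (fst x) (fst y) in
       d \<in> dirs6 \<and> d \<in> copy_dirs (snd x) \<and> diff (fst y) (fst x) \<in> copy_dirs (snd y) \<and>
       (d \<in> {dNNE, dSSW} \<longrightarrow> copy_side (snd x) = copy_side (snd y)))"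

definition regions :: "(int \<times> int) set \<Rightarrow> (int \<times> int) set set" where
  "regions V = {fst ` comp split_adj (split_nodes V) x | x. x \<in> split_nodes V}"

definition gates :: "(int \<times> int) set \<Rightarrow> (int \<times> int) set set" where
  "gates V = {R \<inter> P | R P. R \<in> regions V \<and> P \<in> split_portals V \<and> R \<inter> P \<noteq> {}}"

end

theory Submission
  imports Defs
begin

(* A gate R \<inter> P is determined by any single copy of a node of P that lies in R, so it
  suffices to bound, for each splitting portal P, the number of components of the split graph
  met by the copies of nodes of P.  Walking down P, the West copy of a node stays joined to the
  West copy of the node below by their NNE-SSW edge; the only exception is the upper West copy
  CWN of a node v_ESE(H), which has no downward edge.  The same holds for East copies and
  v_WNW(H).  Hence every copy reaches one of at most 2 + e(P) + w(P) representatives, namely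
  the copies of the lowest node of P and the upper copies of split nodes, where e(P) and w(P)
  count the nodes v_ESE(H) and v_WNW(H) on P.  The splitting portals are pairwise disjoint and
  at most 2|holes| many, so the sum over all portals is at most 4|holes| + |holes| + |holes|. *)

lemma comp_subset: "comp r S x \<subseteq> S"
  by (auto simp: comp_def)

lemma comp_self: "x \<in> S \<Longrightarrow> x \<in> comp r S x"
  by (simp add: comp_def)

lemma comp_step: "x \<in> S \<Longrightarrow> y \<in> S \<Longrightarrow> r x y \<Longrightarrow> y \<in> comp r S x"
  by (auto simp: comp_def)

lemma comp_trans: "y \<in> comp r S x \<Longrightarrow> z \<in> comp r S y \<Longrightarrow> z \<in> comp r S x"
  by (auto simp: comp_def intro: rtranclp_trans)

lemma comp_sym:
  assumes "symp r" and "y \<in> comp r S x"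
  shows "x \<in> comp r S y"
proof -
  have "symp (\<lambda>a b. a \<in> S \<and> b \<in> S \<and> r a b)"
    using assms(1) by (auto intro: sympI dest: sympD)
  then show ?thesis
    using assms(2) by (auto simp: comp_def dest: sympD[OF symp_rtranclp])
qed

lemma comp_eq: "symp r \<Longrightarrow> y \<in> comp r S x \<Longrightarrow> comp r S y = comp r S x"
  by (meson comp_sym comp_trans subsetI subset_antisym)

lemma symp_grid_adj: "symp grid_adj"
  by (auto intro!: sympI simp: grid_adj_def diff_def dirs6_def dE_def dW_def dNNE_def dSSW_def dNNW_def dSSE_def)

lemma y_adj_iff: "y_adj p q \<longleftrightarrow> fst q = fst p \<and> \<bar>snd q - snd p\<bar> = 1"
  by (auto simp: y_adj_def diff_def dNNE_def dSSW_def prod_eq_iff)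

lemma symp_y_adj: "symp y_adj"
  by (auto intro!: sympI simp: y_adj_iff)

lemma diff_swap: "diff q p = (- fst (diff p q), - snd (diff p q))"
  by (simp add: diff_def)

lemma dirs6_uminus: "(a, b) \<in> dirs6 \<Longrightarrow> (- a, - b) \<in> dirs6"
  by (auto simp: dirs6_def dE_def dW_def dNNE_def dSSW_def dNNW_def dSSE_def)

lemma vertical_uminus: "(- a, - b) \<in> {dNNE, dSSW} \<Longrightarrow> (a, b) \<in> {dNNE, dSSW}"
  by (auto simp: dNNE_def dSSW_def)

lemma symp_split_adj: "symp split_adj"
proof (rule sympI)
  fix x y :: "(int \<times> int) \<times> copy"
  obtain a b where "diff (fst x) (fst y) = (a, b)"
    by fastforce
  moreover assume "split_adj x y"
  ultimately show "split_adj y x"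
    unfolding split_adj_def Let_def diff_swap[of "fst x"]
    using dirs6_uminus[of a b] vertical_uminus[of a b] by auto
qed

lemma y_portal_column: "p \<in> comp y_adj S v \<Longrightarrow> fst p = fst v"
  unfolding comp_def by (auto elim: rtranclp_induct simp: y_adj_iff)

lemma y_portal_interval_root:
  assumes p: "p \<in> comp y_adj S v" and t: "min (snd v) (snd p) \<le> t" "t \<le> max (snd v) (snd p)"
  shows "(fst v, t) \<in> comp y_adj S v"
proof -
  have "v \<in> S" and path: "(\<lambda>a b. a \<in> S \<and> b \<in> S \<and> y_adj a b)\<^sup>*\<^sup>* v p"
    using p by (simp_all add: comp_def)
  from path show ?thesis
    using t
  proof (induction arbitrary: t rule: rtranclp_induct)
    case base
    then show ?case using \<open>v \<in> S\<close> by (simp add: comp_self)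
  next
    case (step q r)
    then have "q \<in> comp y_adj S v" using \<open>v \<in> S\<close> by (simp add: comp_def)
    moreover have "r \<in> comp y_adj S q" using step.hyps(2) comp_step[of q S r y_adj] by blast
    ultimately have "r \<in> comp y_adj S v" by (rule comp_trans)
    then have r: "r = (fst v, snd r)" by (simp add: y_portal_column prod_eq_iff)
    have "\<bar>snd r - snd q\<bar> = 1" using step.hyps(2) by (simp add: y_adj_iff)
    then have "t = snd r \<or> (min (snd v) (snd q) \<le> t \<and> t \<le> max (snd v) (snd q))"
      using step.prems by linarith
    then show ?case using step.IH r \<open>r \<in> comp y_adj S v\<close> by metis
  qed
qed

lemma y_portal_interval:
  assumes "p \<in> comp y_adj S v" "q \<in> comp y_adj S v" "snd q \<le> t" "t \<le> snd p"
  shows "(fst v, t) \<in> comp y_adj S v"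
proof -
  have same: "comp y_adj S q = comp y_adj S v"
    using assms(2) by (rule comp_eq[OF symp_y_adj])
  then have "(fst q, t) \<in> comp y_adj S q"
    using assms by (intro y_portal_interval_root) auto
  then show ?thesis using same y_portal_column[OF assms(2)] by simp
qed

lemma hole_eq_comp: "H \<in> holes V \<Longrightarrow> h \<in> H \<Longrightarrow> H = comp grid_adj (- V) h"
  unfolding holes_def using comp_eq[OF symp_grid_adj] by blast

lemma hole_east_neighbour_in:
  assumes H: "H \<in> holes V"
  obtains h where "h \<in> H" and "(fst h + 1, snd h) \<in> V"
proof -
  obtain x where x: "x \<notin> V" "H = comp grid_adj (- V) x" and "finite H"
    using H by (auto simp: holes_def)
  then have "H \<noteq> {}" using comp_self[of x "- V" grid_adj] by auto
  with \<open>finite H\<close> have "Max (fst ` H) \<in> fst ` H" by simp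
  then obtain h where h: "h \<in> H" "fst h = Max (fst ` H)" by auto
  define q where "q = (fst h + 1, snd h)"
  have "q \<notin> H"
  proof
    assume "q \<in> H"
    then have "fst q \<le> Max (fst ` H)" using \<open>finite H\<close> by simp
    then show False using h(2) by (simp add: q_def)
  qed
  have "h \<in> - V"
    using h(1) x(2) comp_subset[of grid_adj "- V" x] by blast
  moreover have "grid_adj h q"
    by (simp add: q_def grid_adj_def diff_def dirs6_def dE_def)
  ultimately have "q \<in> V"
    using comp_step[of h "- V" q grid_adj] \<open>q \<notin> H\<close> hole_eq_comp[OF H h(1)] by blast
  with h(1) show ?thesis unfolding q_def by (rule that)
qed

lemma finite_holes: "finite V \<Longrightarrow> finite (holes V)"
proof (rule finite_surj)
  show "holes V \<subseteq> (\<lambda>q. comp grid_adj (- V) (fst q - 1, snd q)) ` V"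
  proof
    fix H assume H: "H \<in> holes V"
    then obtain h where h: "h \<in> H" "(fst h + 1, snd h) \<in> V"
      by (rule hole_east_neighbour_in)
    then show "H \<in> (\<lambda>q. comp grid_adj (- V) (fst q - 1, snd q)) ` V"
      using hole_eq_comp[OF H h(1)] by (intro image_eqI[of _ _ "(fst h + 1, snd h)"]) simp_all
  qed
qed

lemma split_portal_is_portal: "P \<in> split_portals V \<Longrightarrow> \<exists>v. P = comp y_adj V v"
  unfolding split_portals_def portal_y_def by blast

lemma split_portals_disjoint:
  assumes "P \<in> split_portals V" "Q \<in> split_portals V" "p \<in> P" "p \<in> Q"
  shows "P = Q"
  using split_portal_is_portal[OF assms(1)] split_portal_is_portal[OF assms(2)] assms(3,4)
    comp_eq[OF symp_y_adj] by metis

lemma finite_split_portals: "finite V \<Longrightarrow> finite (split_portals V)"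
  by (simp add: split_portals_def finite_holes)

lemma card_split_portals_le: "finite V \<Longrightarrow> card (split_portals V) \<le> 2 * card (holes V)"
proof -
  assume "finite V"
  then have "card (split_portals V) \<le> (\<Sum>H\<in>holes V. card {portal_y V (v_WNW V H), portal_y V (v_ESE V H)})"
    unfolding split_portals_def by (intro card_UN_le finite_holes)
  also have "\<dots> \<le> (\<Sum>H\<in>holes V. 2)"
    by (intro sum_mono) (simp add: card_insert_le_m1)
  finally show ?thesis by simp
qed

lemma sum_card_Int_split_portals_le:
  assumes "finite V" "finite A"
  shows "(\<Sum>P\<in>split_portals V. card (P \<inter> A)) \<le> card A"
proof -
  have "(\<Sum>P\<in>split_portals V. card (P \<inter> A)) = card (\<Union>P\<in>split_portals V. P \<inter> A)"
    using assms split_portals_disjoint[of _ V]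
    by (intro card_UN_disjoint[symmetric]) (auto simp: finite_split_portals)
  also have "\<dots> \<le> card A"
    using assms(2) by (intro card_mono) auto
  finally show ?thesis .
qed

lemma split_portal_column:
  assumes "P \<in> split_portals V" "finite V"
  obtains a where "finite P" "P \<subseteq> V" "\<And>p. p \<in> P \<Longrightarrow> p = (a, snd p)"
    "\<And>p t. p \<in> P \<Longrightarrow> Min (snd ` P) \<le> t \<Longrightarrow> t \<le> snd p \<Longrightarrow> (a, t) \<in> P"
proof -
  obtain v where P: "P = comp y_adj V v"
    using split_portal_is_portal[OF assms(1)] by blast
  then have "P \<subseteq> V" by (simp add: comp_subset)
  then have "finite P" using assms(2) finite_subset by blast
  moreover have "(fst v, t) \<in> P" if "p \<in> P" "Min (snd ` P) \<le> t" "t \<le> snd p" for p t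
  proof -
    have "Min (snd ` P) \<in> snd ` P" using \<open>finite P\<close> \<open>p \<in> P\<close> by (intro Min_in) auto
    then obtain q where "q \<in> P" "snd q = Min (snd ` P)" by auto
    then show ?thesis using that P y_portal_interval by metis
  qed
  ultimately show ?thesis
    using that[of "fst v"] \<open>P \<subseteq> V\<close> P y_portal_column by (simp add: prod_eq_iff)
qed

lemma split_node_on_portal_cases:
  assumes "(p, c) \<in> split_nodes V" "p \<in> \<Union>(split_portals V)"
  shows "c = (if p \<in> v_ESE V ` holes V then CWS else CW) \<or> c = (if p \<in> v_WNW V ` holes V then CES else CE)
    \<or> (c = CWN \<and> p \<in> v_ESE V ` holes V) \<or> (c = CEN \<and> p \<in> v_WNW V ` holes V)"
  using assms by (auto simp: split_nodes_def split: if_splits)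

lemma split_adj_down:
  assumes "c \<in> {CW, CWS, CE, CES}" "(a, b - 1) \<in> V" "(a, b - 1) \<in> \<Union>(split_portals V)"
  shows "\<exists>c'. ((a, b - 1), c') \<in> split_nodes V \<and> split_adj ((a, b), c) ((a, b - 1), c')"
proof (cases "c \<in> {CW, CWS}")
  case True
  let ?c' = "if (a, b - 1) \<in> v_ESE V ` holes V then CWN else CW"
  have "((a, b - 1), ?c') \<in> split_nodes V"
    using assms(2,3) by (simp add: split_nodes_def)
  moreover have "split_adj ((a, b), c) ((a, b - 1), ?c')"
    using True by (auto simp: split_adj_def diff_def dirs6_def dNNE_def dSSW_def)
  ultimately show ?thesis by blast
next
  case False
  let ?c' = "if (a, b - 1) \<in> v_WNW V ` holes V then CEN else CE"
  have "((a, b - 1), ?c') \<in> split_nodes V"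
    using assms(2,3) by (simp add: split_nodes_def)
  moreover have "split_adj ((a, b), c) ((a, b - 1), ?c')"
    using False assms(1) by (auto simp: split_adj_def diff_def dirs6_def dNNE_def dSSW_def)
  ultimately show ?thesis by blast
qed

definition portal_reps :: "(int \<times> int) set \<Rightarrow> (int \<times> int) set \<Rightarrow> ((int \<times> int) \<times> copy) set" where
  "portal_reps V P = {(p, c) \<in> split_nodes V. p \<in> P \<and> (snd p = Min (snd ` P) \<or> c \<in> {CWN, CEN})}"

lemma finite_copy_UNIV: "finite (UNIV :: copy set)"
proof -
  have "(UNIV :: copy set) = {Orig, CW, CE, CWS, CWN, CEN, CES}"
    using copy.exhaust by blast
  then show ?thesis by (metis finite.emptyI finite_insert)
qed

lemma finite_portal_reps:
  assumes "P \<in> split_portals V" "finite V"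
  shows "finite (portal_reps V P)"
proof (rule finite_subset)
  show "portal_reps V P \<subseteq> P \<times> UNIV" by (auto simp: portal_reps_def)
  show "finite (P \<times> (UNIV :: copy set))"
    using split_portal_column[OF assms] finite_copy_UNIV by blast
qed

lemma card_portal_reps_le:
  assumes "P \<in> split_portals V" "finite V"
  shows "card (portal_reps V P) \<le> 2 + card (P \<inter> v_ESE V ` holes V) + card (P \<inter> v_WNW V ` holes V)"
proof -
  obtain a where "finite P" and column: "\<And>p. p \<in> P \<Longrightarrow> p = (a, snd p)"
    using split_portal_column[OF assms] by metis
  define b where "b = (a, Min (snd ` P))"
  let ?vE = "v_ESE V ` holes V" and ?vW = "v_WNW V ` holes V"
  have "portal_reps V P \<subseteq> {(b, if b \<in> ?vE then CWS else CW), (b, if b \<in> ?vW then CES else CE)}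
    \<union> (\<lambda>q. (q, CWN)) ` (P \<inter> ?vE) \<union> (\<lambda>q. (q, CEN)) ` (P \<inter> ?vW)"
    (is "_ \<subseteq> ?B \<union> ?W \<union> ?E")
  proof
    fix x assume "x \<in> portal_reps V P"
    then obtain p c where x: "x = (p, c)" "p \<in> P" "(p, c) \<in> split_nodes V"
      "snd p = Min (snd ` P) \<or> c \<in> {CWN, CEN}"
      by (auto simp: portal_reps_def)
    have "p \<in> \<Union>(split_portals V)" using x(2) assms(1) by blast
    then consider "c = (if p \<in> ?vE then CWS else CW)" | "c = (if p \<in> ?vW then CES else CE)"
      | "c = CWN \<and> p \<in> ?vE" | "c = CEN \<and> p \<in> ?vW"
      using split_node_on_portal_cases[OF x(3)] by blast
    then show "x \<in> ?B \<union> ?W \<union> ?E"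
    proof cases
      case 1
      then have "p = b" using x(4) column[OF x(2)] by (auto simp: b_def split: if_splits)
      then show ?thesis using 1 x(1) by simp
    next
      case 2
      then have "p = b" using x(4) column[OF x(2)] by (auto simp: b_def split: if_splits)
      then show ?thesis using 2 x(1) by simp
    qed (use x in auto)
  qed
  then have "card (portal_reps V P) \<le> card (?B \<union> ?W \<union> ?E)"
    using \<open>finite P\<close> by (intro card_mono) auto
  also have "\<dots> \<le> card ?B + card ?W + card ?E"
    using card_Un_le[of "?B \<union> ?W" ?E] card_Un_le[of ?B ?W] by linarith
  also have "\<dots> \<le> 2 + card (P \<inter> ?vE) + card (P \<inter> ?vW)"
    using card_image_le[of "P \<inter> ?vE" "\<lambda>q. (q, CWN)"] card_image_le[of "P \<inter> ?vW" "\<lambda>q. (q, CEN)"]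
      \<open>finite P\<close> by (simp add: card_insert_if)
  finally show ?thesis .
qed

lemma portal_reps_reach:
  assumes P: "P \<in> split_portals V" and "finite V" and "p \<in> P" and "(p, c) \<in> split_nodes V"
  shows "\<exists>r\<in>portal_reps V P. r \<in> comp split_adj (split_nodes V) (p, c)"
proof -
  obtain a where "finite P" "P \<subseteq> V" and column: "\<And>p. p \<in> P \<Longrightarrow> p = (a, snd p)"
    and interval: "\<And>p t. p \<in> P \<Longrightarrow> Min (snd ` P) \<le> t \<Longrightarrow> t \<le> snd p \<Longrightarrow> (a, t) \<in> P"
    using split_portal_column[OF P \<open>finite V\<close>] by blast
  let ?SN = "split_nodes V"
  let ?reach = "\<lambda>x. \<exists>r\<in>portal_reps V P. r \<in> comp split_adj ?SN x"
  have reach_column: "\<forall>c. (a, t) \<in> P \<longrightarrow> ((a, t), c) \<in> ?SN \<longrightarrow> ?reach ((a, t), c)" if "Min (snd ` P) \<le> t" for t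
    using that
  proof (induction t rule: int_ge_induct)
    case base
    show ?case
    proof (intro allI impI)
      fix c assume "(a, Min (snd ` P)) \<in> P" and node: "((a, Min (snd ` P)), c) \<in> ?SN"
      then have "((a, Min (snd ` P)), c) \<in> portal_reps V P" by (simp add: portal_reps_def)
      then show "?reach ((a, Min (snd ` P)), c)" using comp_self[OF node] by blast
    qed
  next
    case (step t)
    show ?case
    proof (intro allI impI)
      fix c assume up: "(a, t + 1) \<in> P" and node: "((a, t + 1), c) \<in> ?SN"
      show "?reach ((a, t + 1), c)"
      proof (cases "c \<in> {CWN, CEN}")
        case True
        then have "((a, t + 1), c) \<in> portal_reps V P"
          using up node by (simp add: portal_reps_def)
        then show ?thesis using comp_self[OF node] by blast
      next
        case False
        moreover have "(a, t + 1) \<in> \<Union>(split_portals V)" using up P by blast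
        ultimately have low: "c \<in> {CW, CWS, CE, CES}"
          using split_node_on_portal_cases[OF node] by (auto split: if_splits)
        have down: "(a, t) \<in> P" using interval[OF up] step.hyps by simp
        moreover have "(a, t) \<in> V" "(a, t) \<in> \<Union>(split_portals V)"
          using down \<open>P \<subseteq> V\<close> P by auto
        ultimately obtain c' where c': "((a, t), c') \<in> ?SN" "split_adj ((a, t + 1), c) ((a, t), c')"
          using split_adj_down[OF low, of a "t + 1" V] by auto
        have "((a, t), c') \<in> comp split_adj ?SN ((a, t + 1), c)"
          using comp_step[where r = split_adj, OF node c'] .
        moreover obtain r where "r \<in> portal_reps V P" "r \<in> comp split_adj ?SN ((a, t), c')"
          using step.IH down c'(1) by blast
        ultimately show ?thesis by (blast intro: comp_trans)
      qed
    qed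
  qed
  have "Min (snd ` P) \<le> snd p" using \<open>finite P\<close> \<open>p \<in> P\<close> by simp
  moreover have "(a, snd p) = p" using column[OF \<open>p \<in> P\<close>] by simp
  ultimately show ?thesis using reach_column[of "snd p"] assms(3,4) by simp
qed

lemma gates_subset_portal_reps:
  assumes "finite V"
  shows "gates V \<subseteq>
    (\<Union>P\<in>split_portals V. (\<lambda>r. fst ` comp split_adj (split_nodes V) r \<inter> P) ` portal_reps V P)"
proof
  let ?SN = "split_nodes V"
  fix G assume "G \<in> gates V"
  then obtain R P where G: "G = R \<inter> P" "R \<in> regions V" "P \<in> split_portals V" "R \<inter> P \<noteq> {}"
    unfolding gates_def by blast
  obtain x where R: "R = fst ` comp split_adj ?SN x"
    using G(2) unfolding regions_def by blast
  obtain p c where "p \<in> P" and pc: "(p, c) \<in> comp split_adj ?SN x"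
    using G(4) R by auto
  then have "(p, c) \<in> ?SN" using comp_subset[of split_adj ?SN x] by blast
  then obtain r where r: "r \<in> portal_reps V P" "r \<in> comp split_adj ?SN (p, c)"
    using portal_reps_reach[OF G(3) assms \<open>p \<in> P\<close>] by blast
  have "comp split_adj ?SN r = comp split_adj ?SN x"
    using comp_eq[OF symp_split_adj r(2)] comp_eq[OF symp_split_adj pc] by simp
  then show "G \<in> (\<Union>P\<in>split_portals V. (\<lambda>r. fst ` comp split_adj ?SN r \<inter> P) ` portal_reps V P)"
    using G(1,3) R r(1) by auto
qed

lemma card_gates_le_sum_portal_reps:
  assumes "finite V"
  shows "card (gates V) \<le> (\<Sum>P\<in>split_portals V. card (portal_reps V P))"
proof -
  let ?gate = "\<lambda>P r. fst ` comp split_adj (split_nodes V) r \<inter> P"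
  have "card (gates V) \<le> card (\<Union>P\<in>split_portals V. ?gate P ` portal_reps V P)"
    using assms by (intro card_mono gates_subset_portal_reps)
      (auto simp: finite_split_portals finite_portal_reps)
  also have "\<dots> \<le> (\<Sum>P\<in>split_portals V. card (?gate P ` portal_reps V P))"
    using assms by (intro card_UN_le finite_split_portals)
  also have "\<dots> \<le> (\<Sum>P\<in>split_portals V. card (portal_reps V P))"
    using assms by (intro sum_mono card_image_le finite_portal_reps)
  finally show ?thesis .
qed

theorem mainTheorem6:
  fixes V :: "(int \<times> int) set"
  assumes "finite V" and "V \<noteq> {}" and "grid_connected V"
  shows "card (gates V) \<le> 6 * card (holes V)"
proof -
  let ?vE = "v_ESE V ` holes V" and ?vW = "v_WNW V ` holes V"
  have "card (gates V) \<le> (\<Sum>P\<in>split_portals V. card (portal_reps V P))"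
    using assms(1) by (rule card_gates_le_sum_portal_reps)
  also have "\<dots> \<le> (\<Sum>P\<in>split_portals V. 2 + card (P \<inter> ?vE) + card (P \<inter> ?vW))"
    using assms(1) by (intro sum_mono card_portal_reps_le)
  also have "\<dots> = 2 * card (split_portals V)
      + (\<Sum>P\<in>split_portals V. card (P \<inter> ?vE)) + (\<Sum>P\<in>split_portals V. card (P \<inter> ?vW))"
    by (simp only: sum.distrib sum_constant) simp
  also have "\<dots> \<le> 2 * card (split_portals V) + card ?vE + card ?vW"
    using assms(1) by (intro add_mono sum_card_Int_split_portals_le) (auto simp: finite_holes)
  also have "\<dots> \<le> 2 * (2 * card (holes V)) + card (holes V) + card (holes V)"
    using card_split_portals_le[OF assms(1)] card_image_le[OF finite_holes[OF assms(1)], of "v_ESE V"]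
      card_image_le[OF finite_holes[OF assms(1)], of "v_WNW V"] by linarith
  finally show ?thesis by simp
qed

end
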